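(* Let $(X,(\cdot,\cdot|\cdot))$ be a 2-inner product space over $\mathbb{K}\in\{\mathbb{R},\mathbb{C}\}$, let $n$ be a positive integer, let $x,y_1,\dots,y_n,z\in X$ and $c_1,\dots,c_n\in\mathbb{K}$. Then $\big|\sum_{i=1}^n c_i(x,y_i|z)\big|^2$ is bounded above by each of the following four quantities: (a) $\|x|z\|^2\sum_{i=1}^n|c_i|^2\Big\{\max_{1\le i\le n}\|y_i|z\|^2+\big(\sum_{1\le i\ne j\le n}|(y_i,y_j|z)|^2\big)^{1/2}\Big\}$; (b) $\|x|z\|^2\max_{1\le i\le n}|c_i|^2\Big\{\sum_{i=1}^n\|y_i|z\|^2+\sum_{1\le i\ne j\le n}|(y_i,y_j|z)|\Big\}$; (c) for any $p>1$, $\frac1p+\frac1q=1$: $\|x|z\|^2\big(\sum_{i=1}^n|c_i|^{2p}\big)^{1/p}\Big\{\big(\sum_{i=1}^n\|y_i|z\|^{2q}\big)^{1/q}+(n-1)^{1/p}\big(\sum_{1\le i\ne j\le n}|(y_i,y_j|z)|^{q}\big)^{1/q}\Big\}$; (d) $\|x|z\|^2\sum_{i=1}^n|c_i|^2\Big\{\max_{1\le i\le n}\|y_i|z\|^2+(n-1)\max_{1\le i\ne j\le n}|(y_i,y_j|z)|\Big\}$.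
   Context: A 2-inner product on a linear space $X$ of dimension greater than $1$ over $\mathbb{K}$ ($\mathbb{K}=\mathbb{R}$ or $\mathbb{C}$) is a function $(\cdot,\cdot|\cdot):X\times X\times X\to\mathbb{K}$ such that for all $x,x',y,z\in X$ and $\alpha\in\mathbb{K}$: (i) $(x,x|z)\ge 0$, and $(x,x|z)=0$ iff $x$ and $z$ are linearly dependent; (ii) $(x,x|z)=(z,z|x)$; (iii) $(y,x|z)=\overline{(x,y|z)}$; (iv) $(\alpha x,y|z)=\alpha(x,y|z)$; (v) $(x+x',y|z)=(x,y|z)+(x',y|z)$. The associated 2-norm is $\|x|z\|=\sqrt{(x,x|z)}$. Sums and maxima indexed by $1\le i\ne j\le n$ run over all ordered pairs $(i,j)$ with $i\ne j$. *)

theory Defs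
  imports Complex_Main
begin

text \<open>Linear dependence of the pair (x, z) (as a family, so x = z counts as dependent).\<close>

definition lindep_R :: "'a::real_vector \<Rightarrow> 'a \<Rightarrow> bool" where
  "lindep_R x z \<longleftrightarrow> (\<exists>a b::real. (a \<noteq> 0 \<or> b \<noteq> 0) \<and> a *\<^sub>R x + b *\<^sub>R z = 0)"

text \<open>There is no complex-vector-space type class in the distribution; a complex linear space is
  given by a scalar multiplication sc satisfying the locale vector_space.\<close>

definition lindep_C :: "(complex \<Rightarrow> 'a::ab_group_add \<Rightarrow> 'a) \<Rightarrow> 'a \<Rightarrow> 'a \<Rightarrow> bool" where
  "lindep_C sc x z \<longleftrightarrow> (\<exists>a b::complex. (a \<noteq> 0 \<or> b \<noteq> 0) \<and> sc a x + sc b z = 0)"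

definition two_inner_R :: "('a::real_vector \<Rightarrow> 'a \<Rightarrow> 'a \<Rightarrow> real) \<Rightarrow> bool" where
  "two_inner_R ip \<longleftrightarrow>
     (\<exists>u v::'a. \<not> lindep_R u v) \<and>
     (\<forall>x z. 0 \<le> ip x x z \<and> (ip x x z = 0 \<longleftrightarrow> lindep_R x z)) \<and>
     (\<forall>x z. ip x x z = ip z z x) \<and>
     (\<forall>x y z. ip y x z = ip x y z) \<and>
     (\<forall>(a::real) x y z. ip (a *\<^sub>R x) y z = a * ip x y z) \<and>
     (\<forall>x x' y z. ip (x + x') y z = ip x y z + ip x' y z)"

definition two_inner_C :: "(complex \<Rightarrow> 'a::ab_group_add \<Rightarrow> 'a) \<Rightarrow> ('a \<Rightarrow> 'a \<Rightarrow> 'a \<Rightarrow> complex) \<Rightarrow> bool" where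
  "two_inner_C sc ip \<longleftrightarrow>
     vector_space sc \<and>
     (\<exists>u v::'a. \<not> lindep_C sc u v) \<and>
     (\<forall>x z. Im (ip x x z) = 0 \<and> 0 \<le> Re (ip x x z) \<and> (ip x x z = 0 \<longleftrightarrow> lindep_C sc x z)) \<and>
     (\<forall>x z. ip x x z = ip z z x) \<and>
     (\<forall>x y z. ip y x z = cnj (ip x y z)) \<and>
     (\<forall>(a::complex) x y z. ip (sc a x) y z = a * ip x y z) \<and>
     (\<forall>x x' y z. ip (x + x') y z = ip x y z + ip x' y z)"

definition tnorm_R :: "('a::real_vector \<Rightarrow> 'a \<Rightarrow> 'a \<Rightarrow> real) \<Rightarrow> 'a \<Rightarrow> 'a \<Rightarrow> real" where
  "tnorm_R ip x z = sqrt (ip x x z)"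

definition tnorm_C :: "('a \<Rightarrow> 'a \<Rightarrow> 'a \<Rightarrow> complex) \<Rightarrow> 'a \<Rightarrow> 'a \<Rightarrow> real" where
  "tnorm_C ip x z = sqrt (Re (ip x x z))"

definition offdiag :: "nat \<Rightarrow> (nat \<times> nat) set" where
  "offdiag n = {(i, j). i \<in> {1..n} \<and> j \<in> {1..n} \<and> i \<noteq> j}"

text \<open>Parameters: nx = \<parallel>x|z\<parallel>, a i = |c_i|, ny i = \<parallel>y_i|z\<parallel>, g i j = |(y_i,y_j|z)|.\<close>

definition boundA :: "nat \<Rightarrow> real \<Rightarrow> (nat \<Rightarrow> real) \<Rightarrow> (nat \<Rightarrow> real) \<Rightarrow> (nat \<Rightarrow> nat \<Rightarrow> real) \<Rightarrow> real" where
  "boundA n nx a ny g =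
     nx\<^sup>2 * (\<Sum>i=1..n. (a i)\<^sup>2) *
       (Max {(ny i)\<^sup>2 | i. i \<in> {1..n}} + sqrt (\<Sum>(i, j)\<in>offdiag n. (g i j)\<^sup>2))"

definition boundB :: "nat \<Rightarrow> real \<Rightarrow> (nat \<Rightarrow> real) \<Rightarrow> (nat \<Rightarrow> real) \<Rightarrow> (nat \<Rightarrow> nat \<Rightarrow> real) \<Rightarrow> real" where
  "boundB n nx a ny g =
     nx\<^sup>2 * Max {(a i)\<^sup>2 | i. i \<in> {1..n}} *
       ((\<Sum>i=1..n. (ny i)\<^sup>2) + (\<Sum>(i, j)\<in>offdiag n. g i j))"

definition boundC :: "real \<Rightarrow> real \<Rightarrow> nat \<Rightarrow> real \<Rightarrow> (nat \<Rightarrow> real) \<Rightarrow> (nat \<Rightarrow> real) \<Rightarrow> (nat \<Rightarrow> nat \<Rightarrow> real) \<Rightarrow> real" where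
  "boundC p q n nx a ny g =
     nx\<^sup>2 * (\<Sum>i=1..n. a i powr (2 * p)) powr (1 / p) *
       ((\<Sum>i=1..n. ny i powr (2 * q)) powr (1 / q)
        + real (n - 1) powr (1 / p) * (\<Sum>(i, j)\<in>offdiag n. g i j powr q) powr (1 / q))"

definition boundD :: "nat \<Rightarrow> real \<Rightarrow> (nat \<Rightarrow> real) \<Rightarrow> (nat \<Rightarrow> real) \<Rightarrow> (nat \<Rightarrow> nat \<Rightarrow> real) \<Rightarrow> real" where
  "boundD n nx a ny g =
     nx\<^sup>2 * (\<Sum>i=1..n. (a i)\<^sup>2) *
       (Max {(ny i)\<^sup>2 | i. i \<in> {1..n}} + real (n - 1) * Max {g i j | i j. (i, j) \<in> offdiag n})"

end

theory Submission
  imports Defs "HOL-Analysis.Convex"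
begin

(* For fixed z, (u, v) |-> (u,v|z) is a positive semidefinite hermitian form. Cauchy-Schwarz for
  it, applied to x and w = sum_i cnj(c_i) y_i, gives |sum_i c_i (x,y_i|z)|^2 <= ||x|z||^2 (w,w|z),
  and expanding (w,w|z) with the triangle inequality bounds it by the majorant
  sum_i |c_i|^2 ||y_i|z||^2 + sum_{i<>j} |c_i| |c_j| |(y_i,y_j|z)|.
  The four bounds are elementary estimates of this majorant: by maxima, by Cauchy-Schwarz or
  Hoelder on the off-diagonal sum, and by 2 |c_i| |c_j| <= |c_i|^2 + |c_j|^2. *)

lemma Holder_inequality_sum:
  fixes u v :: "'i \<Rightarrow> real"
  assumes "finite I" and u: "\<And>i. i \<in> I \<Longrightarrow> 0 \<le> u i" and v: "\<And>i. i \<in> I \<Longrightarrow> 0 \<le> v i"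
    and p: "1 < p" and pq: "1 / p + 1 / q = 1"
  shows "(\<Sum>i\<in>I. u i * v i)
    \<le> (\<Sum>i\<in>I. u i powr p) powr (1 / p) * (\<Sum>i\<in>I. v i powr q) powr (1 / q)"
proof -
  have q: "1 < q"
  proof -
    have "1 / q = 1 - 1 / p"
      using pq by simp
    moreover have "0 < 1 - 1 / p" "1 - 1 / p < 1"
      using p by (auto simp: field_simps)
    ultimately have "0 < 1 / q" "1 / q < 1"
      by auto
    then show ?thesis
      by (simp add: field_simps split: if_splits)
  qed
  define U where "U = (\<Sum>i\<in>I. u i powr p)"
  define V where "V = (\<Sum>i\<in>I. v i powr q)"
  show ?thesis
  proof (cases "U = 0 \<or> V = 0")
    case True
    then have "(\<forall>i\<in>I. u i = 0) \<or> (\<forall>i\<in>I. v i = 0)"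
      using \<open>finite I\<close> by (auto simp: U_def V_def sum_nonneg_eq_0_iff)
    then show ?thesis
      by (auto simp: U_def V_def)
  next
    case False
    moreover have "0 \<le> U" "0 \<le> V"
      by (simp_all add: U_def V_def sum_nonneg)
    ultimately have "0 < U" "0 < V"
      by auto
    define A where "A = U powr (1 / p)"
    define B where "B = V powr (1 / q)"
    have "0 < A" "0 < B" and A: "A powr p = U" and B: "B powr q = V"
      using \<open>0 < U\<close> \<open>0 < V\<close> p q by (auto simp: A_def B_def powr_powr)
    have "(\<Sum>i\<in>I. (u i / A) * (v i / B)) \<le> (\<Sum>i\<in>I. (u i / A) powr p / p + (v i / B) powr q / q)"
      using u v \<open>0 < A\<close> \<open>0 < B\<close> by (intro sum_mono Youngs_inequality p q pq) auto
    also have "\<dots> = (\<Sum>i\<in>I. u i powr p / (p * U) + v i powr q / (q * V))"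
      using u v \<open>0 < A\<close> \<open>0 < B\<close> by (intro sum.cong) (auto simp: powr_divide A B mult.commute)
    also have "\<dots> = 1"
      using \<open>0 < U\<close> \<open>0 < V\<close> pq by (simp add: sum.distrib U_def V_def flip: sum_divide_distrib)
    finally have "(\<Sum>i\<in>I. u i * v i) \<le> A * B"
      using \<open>0 < A\<close> \<open>0 < B\<close> by (simp add: sum_divide_distrib[symmetric] divide_le_eq)
    then show ?thesis
      by (simp add: A_def B_def U_def V_def)
  qed
qed

lemma power2_powr: "0 \<le> x \<Longrightarrow> (x\<^sup>2) powr r = x powr (2 * r)" for x :: real
  by (cases "x = 0") (simp_all add: powr_powr flip: powr_numeral)

lemma sum_mult_le_sum_mult_Max:
  fixes w f :: "'i \<Rightarrow> real"
  assumes "finite I" and "\<And>i. i \<in> I \<Longrightarrow> 0 \<le> w i"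
  shows "(\<Sum>i\<in>I. w i * f i) \<le> (\<Sum>i\<in>I. w i) * Max (f ` I)"
  (* No nonemptiness is needed: for I = {} both sides are 0, whatever Max {} is. *)
proof (cases "I = {}")
  case False
  have "(\<Sum>i\<in>I. w i * f i) \<le> (\<Sum>i\<in>I. w i * Max (f ` I))"
    using assms by (intro sum_mono mult_left_mono) auto
  then show ?thesis
    by (simp add: sum_distrib_right)
qed simp

lemma quadratic_nonneg_imp_le:
  fixes P T R :: real
  assumes nonneg: "\<And>r. 0 \<le> P - 2 * r * T + r\<^sup>2 * T * R" and "0 \<le> T" "0 \<le> R"
  shows "T \<le> P * R"
proof (cases "T = 0")
  case True
  then show ?thesis
    using nonneg[of 0] \<open>0 \<le> R\<close> by simp
next
  case False
  then have "0 < T"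
    using \<open>0 \<le> T\<close> by simp
  show ?thesis
  proof (cases "R = 0")
    case True
    have "0 \<le> P - 2 * ((P + 1) / (2 * T)) * T"
      using nonneg[of "(P + 1) / (2 * T)"] True by simp
    also have "\<dots> = -1"
      using \<open>0 < T\<close> by (simp add: field_simps)
    finally show ?thesis
      by simp
  next
    case False
    then have "0 < R"
      using \<open>0 \<le> R\<close> by simp
    have "0 \<le> P - 2 * (1 / R) * T + (1 / R)\<^sup>2 * T * R"
      by (rule nonneg)
    also have "\<dots> = P - T / R"
      using \<open>0 < R\<close> by (simp add: field_simps power2_eq_square)
    finally show ?thesis
      using \<open>0 < R\<close> by (simp add: field_simps)
  qed
qed

lemma offdiag_eq_Sigma: "offdiag n = (SIGMA i:{1..n}. {1..n} - {i})"
  by (auto simp: offdiag_def)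

lemma finite_offdiag [simp]: "finite (offdiag n)"
  by (simp add: offdiag_eq_Sigma)

lemma offdiag_subset: "offdiag n \<subseteq> {1..n} \<times> {1..n}"
  by (auto simp: offdiag_def)

lemma sum_offdiag_swap: "(\<Sum>(i, j)\<in>offdiag n. f i j) = (\<Sum>(i, j)\<in>offdiag n. f j i)"
proof -
  have "prod.swap ` offdiag n = offdiag n"
    by (auto simp: offdiag_def image_iff)
  then show ?thesis
    by (metis (no_types) case_prod_beta fst_swap snd_swap inj_swap sum.reindex_cong)
qed

lemma sum_offdiag_fst:
  "(\<Sum>(i, j)\<in>offdiag n. f i) = of_nat (n - 1) * (\<Sum>i=1..n. f i :: 'a::comm_semiring_1)"
proof -
  have "(\<Sum>(i, j)\<in>offdiag n. f i) = (\<Sum>i=1..n. \<Sum>j\<in>{1..n} - {i}. f i)"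
    unfolding offdiag_eq_Sigma by (rule sum.Sigma[symmetric]) auto
  also have "\<dots> = (\<Sum>i=1..n. of_nat (n - 1) * f i)"
    by (intro sum.cong) auto
  finally show ?thesis
    by (simp add: sum_distrib_left)
qed

lemma sum_offdiag_snd:
  "(\<Sum>(i, j)\<in>offdiag n. f j) = of_nat (n - 1) * (\<Sum>i=1..n. f i :: 'a::comm_semiring_1)"
  using sum_offdiag_swap[of "\<lambda>i j. f j" n] sum_offdiag_fst[of f n] by simp

lemma sum_sum_eq_diag_plus_offdiag:
  "(\<Sum>i=1..n. \<Sum>j=1..n. f i j) = (\<Sum>i=1..n. f i i) + (\<Sum>(i, j)\<in>offdiag n. f i j)"
proof -
  have "(\<Sum>i=1..n. \<Sum>j=1..n. f i j) = (\<Sum>i=1..n. f i i + (\<Sum>j\<in>{1..n} - {i}. f i j))"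
    by (intro sum.cong) (auto simp: sum.remove)
  also have "\<dots> = (\<Sum>i=1..n. f i i) + (\<Sum>(i, j)\<in>offdiag n. f i j)"
    unfolding sum.distrib offdiag_eq_Sigma by (simp add: sum.Sigma)
  finally show ?thesis .
qed

lemma sum_offdiag_mult_le:
  "(\<Sum>(i, j)\<in>offdiag n. a i * a j) \<le> real (n - 1) * (\<Sum>i=1..n. (a i)\<^sup>2)"
proof -
  have "(\<Sum>(i, j)\<in>offdiag n. a i * a j) \<le> (\<Sum>(i, j)\<in>offdiag n. (a i)\<^sup>2 / 2 + (a j)\<^sup>2 / 2)"
    using sum_squares_bound[of "a _" "a _"] by (intro sum_mono) (auto simp: field_simps)
  also have "\<dots> = (\<Sum>(i, j)\<in>offdiag n. (a i)\<^sup>2 / 2) + (\<Sum>(i, j)\<in>offdiag n. (a j)\<^sup>2 / 2)"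
    by (simp add: sum.distrib split_def)
  also have "\<dots> = real (n - 1) * (\<Sum>i=1..n. (a i)\<^sup>2)"
    by (simp only: sum_offdiag_fst sum_offdiag_snd) (simp flip: sum_divide_distrib)
  finally show ?thesis .
qed

definition gram_majorant ::
    "nat \<Rightarrow> (nat \<Rightarrow> real) \<Rightarrow> (nat \<Rightarrow> real) \<Rightarrow> (nat \<Rightarrow> nat \<Rightarrow> real) \<Rightarrow> real" where
  "gram_majorant n a ny g =
     (\<Sum>i=1..n. (a i)\<^sup>2 * (ny i)\<^sup>2) + (\<Sum>(i, j)\<in>offdiag n. a i * a j * g i j)"

lemma gram_majorant_eq_sum_sum:
  assumes "\<And>i. g i i = (ny i)\<^sup>2"
  shows "gram_majorant n a ny g = (\<Sum>i=1..n. \<Sum>j=1..n. a i * a j * g i j)"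
  unfolding sum_sum_eq_diag_plus_offdiag gram_majorant_def by (simp add: assms power2_eq_square)

lemma gram_majorant_le_boundA: "nx\<^sup>2 * gram_majorant n a ny g \<le> boundA n nx a ny g"
proof -
  define S where "S = (\<Sum>i=1..n. (a i)\<^sup>2)"
  define G where "G = (\<Sum>(i, j)\<in>offdiag n. (g i j)\<^sup>2)"
  have diag: "(\<Sum>i=1..n. (a i)\<^sup>2 * (ny i)\<^sup>2) \<le> S * Max {(ny i)\<^sup>2 | i. i \<in> {1..n}}"
    unfolding S_def Setcompr_eq_image by (rule sum_mult_le_sum_mult_Max) auto
  have "(\<Sum>(i, j)\<in>offdiag n. (a i * a j)\<^sup>2) \<le> (\<Sum>(i, j)\<in>{1..n} \<times> {1..n}. (a i * a j)\<^sup>2)"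
    using offdiag_subset by (intro sum_mono2) auto
  also have "\<dots> = S\<^sup>2"
    by (simp add: S_def power2_eq_square sum_product sum.cartesian_product mult_ac)
  finally have "(\<Sum>(i, j)\<in>offdiag n. (a i * a j)\<^sup>2) * G \<le> S\<^sup>2 * G"
    by (rule mult_right_mono) (auto simp: G_def intro: sum_nonneg)
  moreover have "(\<Sum>(i, j)\<in>offdiag n. a i * a j * g i j)\<^sup>2 \<le> (\<Sum>(i, j)\<in>offdiag n. (a i * a j)\<^sup>2) * G"
    unfolding G_def split_def by (rule Cauchy_Schwarz_ineq_sum)
  ultimately have "(\<Sum>(i, j)\<in>offdiag n. a i * a j * g i j)\<^sup>2 \<le> S\<^sup>2 * G"
    by linarith
  then have offdiag: "(\<Sum>(i, j)\<in>offdiag n. a i * a j * g i j) \<le> S * sqrt G"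
    using real_sqrt_le_mono by (fastforce simp: real_sqrt_mult S_def sum_nonneg)
  have "gram_majorant n a ny g \<le> S * (Max {(ny i)\<^sup>2 | i. i \<in> {1..n}} + sqrt G)"
    using diag offdiag by (simp add: gram_majorant_def distrib_left)
  then show ?thesis
    unfolding boundA_def S_def G_def mult.assoc by (simp add: mult_left_mono)
qed

lemma gram_majorant_le_boundB:
  assumes "\<And>i j. 0 \<le> g i j"
  shows "nx\<^sup>2 * gram_majorant n a ny g \<le> boundB n nx a ny g"
proof -
  define M where "M = Max {(a i)\<^sup>2 | i. i \<in> {1..n}}"
  have M: "(a i)\<^sup>2 \<le> M" if "i \<in> {1..n}" for i
    unfolding M_def Setcompr_eq_image using that by (intro Max_ge) auto
  have diag: "(\<Sum>i=1..n. (a i)\<^sup>2 * (ny i)\<^sup>2) \<le> M * (\<Sum>i=1..n. (ny i)\<^sup>2)"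
    unfolding sum_distrib_left using M by (intro sum_mono mult_right_mono) auto
  have offdiag: "(\<Sum>(i, j)\<in>offdiag n. a i * a j * g i j) \<le> M * (\<Sum>(i, j)\<in>offdiag n. g i j)"
    unfolding sum_distrib_left
  proof (intro sum_mono, clarify)
    fix i j
    assume "(i, j) \<in> offdiag n"
    then have "(a i)\<^sup>2 \<le> M" "(a j)\<^sup>2 \<le> M"
      using M by (auto simp: offdiag_def)
    then have "a i * a j \<le> M"
      using sum_squares_bound[of "a i" "a j"] by linarith
    then show "a i * a j * g i j \<le> M * g i j"
      using assms by (rule mult_right_mono)
  qed
  have "gram_majorant n a ny g \<le> M * ((\<Sum>i=1..n. (ny i)\<^sup>2) + (\<Sum>(i, j)\<in>offdiag n. g i j))"
    using diag offdiag by (simp add: gram_majorant_def distrib_left)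
  then show ?thesis
    unfolding boundB_def M_def mult.assoc by (simp add: mult_left_mono)
qed

lemma gram_majorant_le_boundC:
  assumes a: "\<And>i. 0 \<le> a i" and ny: "\<And>i. 0 \<le> ny i" and g: "\<And>i j. 0 \<le> g i j"
    and p: "1 < p" and pq: "1 / p + 1 / q = 1"
  shows "nx\<^sup>2 * gram_majorant n a ny g \<le> boundC p q n nx a ny g"
proof -
  define S where "S = (\<Sum>i=1..n. a i powr (2 * p))"
  define G where "G = (\<Sum>(i, j)\<in>offdiag n. g i j powr q) powr (1 / q)"
  have diag: "(\<Sum>i=1..n. (a i)\<^sup>2 * (ny i)\<^sup>2)
      \<le> S powr (1 / p) * (\<Sum>i=1..n. ny i powr (2 * q)) powr (1 / q)"
    using Holder_inequality_sum[of "{1..n}" "\<lambda>i. (a i)\<^sup>2" "\<lambda>i. (ny i)\<^sup>2" p q] p pq a ny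
    by (simp add: power2_powr S_def)
  have "(\<Sum>(i, j)\<in>offdiag n. (a i * a j) powr p)
      = (\<Sum>(i, j)\<in>offdiag n. a i powr p * a j powr p)"
    using a by (simp add: powr_mult)
  also have "\<dots> \<le> real (n - 1) * (\<Sum>i=1..n. (a i powr p)\<^sup>2)"
    by (rule sum_offdiag_mult_le)
  also have "(\<Sum>i=1..n. (a i powr p)\<^sup>2) = S"
    unfolding S_def by (intro sum.cong) (auto simp: power2_eq_square simp flip: powr_add)
  finally have "(\<Sum>(i, j)\<in>offdiag n. (a i * a j) powr p) powr (1 / p)
      \<le> (real (n - 1) * S) powr (1 / p)"
    using p a by (intro powr_mono2) (auto intro: sum_nonneg)
  then have "(\<Sum>(i, j)\<in>offdiag n. (a i * a j) powr p) powr (1 / p) * G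
      \<le> real (n - 1) powr (1 / p) * S powr (1 / p) * G"
    by (simp add: G_def S_def powr_mult sum_nonneg mult_right_mono)
  moreover have "(\<Sum>(i, j)\<in>offdiag n. a i * a j * g i j)
      \<le> (\<Sum>(i, j)\<in>offdiag n. (a i * a j) powr p) powr (1 / p) * G"
    using Holder_inequality_sum[of "offdiag n" "\<lambda>(i, j). a i * a j" "\<lambda>(i, j). g i j" p q] p pq a g
    by (simp add: split_def G_def)
  ultimately have offdiag: "(\<Sum>(i, j)\<in>offdiag n. a i * a j * g i j)
      \<le> real (n - 1) powr (1 / p) * S powr (1 / p) * G"
    by linarith
  have "gram_majorant n a ny g
      \<le> S powr (1 / p) * ((\<Sum>i=1..n. ny i powr (2 * q)) powr (1 / q) + real (n - 1) powr (1 / p) * G)"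
    using diag offdiag by (simp add: gram_majorant_def distrib_left mult_ac)
  then show ?thesis
    unfolding boundC_def S_def G_def mult.assoc by (simp add: mult_left_mono)
qed

lemma gram_majorant_le_boundD:
  assumes a: "\<And>i. 0 \<le> a i" and g: "\<And>i j. 0 \<le> g i j"
  shows "nx\<^sup>2 * gram_majorant n a ny g \<le> boundD n nx a ny g"
proof -
  define S where "S = (\<Sum>i=1..n. (a i)\<^sup>2)"
  define M where "M = Max ((\<lambda>(i, j). g i j) ` offdiag n)"
  have M_eq: "Max {g i j | i j. (i, j) \<in> offdiag n} = M"
    unfolding M_def by (rule arg_cong[where f = Max]) auto
  have diag: "(\<Sum>i=1..n. (a i)\<^sup>2 * (ny i)\<^sup>2) \<le> S * Max {(ny i)\<^sup>2 | i. i \<in> {1..n}}"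
    unfolding S_def Setcompr_eq_image by (rule sum_mult_le_sum_mult_Max) auto
  have offdiag: "(\<Sum>(i, j)\<in>offdiag n. a i * a j * g i j) \<le> S * (real (n - 1) * M)"
  proof (cases "n \<le> 1")
    case True
    then have "offdiag n = {}"
      by (auto simp: offdiag_def)
    then show ?thesis
      using True by simp
  next
    case False
    then have "(1, 2) \<in> offdiag n"
      by (auto simp: offdiag_def)
    then have "0 \<le> M"
      unfolding M_def using g[of 1 2] by (intro order_trans[OF _ Max_ge]) auto
    have "(\<Sum>(i, j)\<in>offdiag n. a i * a j * g i j) \<le> (\<Sum>(i, j)\<in>offdiag n. a i * a j) * M"
      using sum_mult_le_sum_mult_Max[of "offdiag n" "\<lambda>(i, j). a i * a j" "\<lambda>(i, j). g i j"] a
      by (simp add: M_def split_def)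
    also have "\<dots> \<le> real (n - 1) * S * M"
      unfolding S_def using \<open>0 \<le> M\<close> by (intro mult_right_mono sum_offdiag_mult_le)
    finally show ?thesis
      by (simp add: mult_ac)
  qed
  have "gram_majorant n a ny g \<le> S * (Max {(ny i)\<^sup>2 | i. i \<in> {1..n}} + real (n - 1) * M)"
    using diag offdiag by (simp add: gram_majorant_def distrib_left)
  then show ?thesis
    unfolding boundD_def S_def M_eq mult.assoc by (simp add: mult_left_mono)
qed

locale real_semi_inner =
  fixes B :: "'a::real_vector \<Rightarrow> 'a \<Rightarrow> real"
  assumes nonneg: "0 \<le> B x x"
    and commute: "B y x = B x y"
    and scaleR_left: "B (r *\<^sub>R x) y = r * B x y"
    and add_left: "B (x + x') y = B x y + B x' y"
begin

lemma scaleR_right: "B x (r *\<^sub>R y) = r * B x y"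
  by (metis commute scaleR_left)

lemma add_right: "B x (y + y') = B x y + B x y'"
  by (metis commute add_left)

lemma sum_left: "B (\<Sum>i\<in>I. f i) y = (\<Sum>i\<in>I. B (f i) y)"
  using scaleR_left[of 0] by (induction I rule: infinite_finite_induct) (simp_all add: add_left)

lemma sum_right: "B x (\<Sum>i\<in>I. f i) = (\<Sum>i\<in>I. B x (f i))"
  using sum_left[of f I x] by (simp add: commute)

lemma Cauchy_Schwarz: "(B x y)\<^sup>2 \<le> B x x * B y y"
proof (rule quadratic_nonneg_imp_le)
  fix r
  define s where "s = - r * B x y"
  have "B (x + s *\<^sub>R y) (x + s *\<^sub>R y) = B x x + 2 * s * B x y + s\<^sup>2 * B y y"
    by (simp add: add_left add_right scaleR_left scaleR_right commute[of y x]
        power2_eq_square algebra_simps)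
  also have "\<dots> = B x x - 2 * r * (B x y)\<^sup>2 + r\<^sup>2 * (B x y)\<^sup>2 * B y y"
    by (simp add: s_def power2_eq_square)
  finally show "0 \<le> B x x - 2 * r * (B x y)\<^sup>2 + r\<^sup>2 * (B x y)\<^sup>2 * B y y"
    using nonneg[of "x + s *\<^sub>R y"] by simp
qed (simp_all add: nonneg)

lemma abs_sum_le_gram:
  "\<bar>\<Sum>i\<in>I. c i * B x (y i)\<bar>\<^sup>2
     \<le> B x x * (\<Sum>i\<in>I. \<Sum>j\<in>I. \<bar>c i\<bar> * \<bar>c j\<bar> * \<bar>B (y i) (y j)\<bar>)"
proof -
  define w where "w = (\<Sum>i\<in>I. c i *\<^sub>R y i)"
  have "B (y i) w = (\<Sum>j\<in>I. c j * B (y i) (y j))" for i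
    by (simp add: w_def sum_right scaleR_right)
  then have "B w w = (\<Sum>i\<in>I. \<Sum>j\<in>I. c i * c j * B (y i) (y j))"
    by (subst (1) w_def) (simp add: sum_left scaleR_left sum_distrib_left mult.assoc)
  also have "\<dots> \<le> (\<Sum>i\<in>I. \<Sum>j\<in>I. \<bar>c i\<bar> * \<bar>c j\<bar> * \<bar>B (y i) (y j)\<bar>)"
    by (intro sum_mono) (simp flip: abs_mult)
  finally have "B x x * B w w
      \<le> B x x * (\<Sum>i\<in>I. \<Sum>j\<in>I. \<bar>c i\<bar> * \<bar>c j\<bar> * \<bar>B (y i) (y j)\<bar>)"
    by (simp add: mult_left_mono nonneg)
  moreover have "B x w = (\<Sum>i\<in>I. c i * B x (y i))"
    by (simp add: w_def sum_right scaleR_right)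
  ultimately show ?thesis
    using Cauchy_Schwarz[of x w] by simp
qed

end

locale complex_semi_inner =
  fixes sc :: "complex \<Rightarrow> 'b::ab_group_add \<Rightarrow> 'b" and B :: "'b \<Rightarrow> 'b \<Rightarrow> complex"
  assumes Re_nonneg: "0 \<le> Re (B x x)"
    and cnj_commute: "B y x = cnj (B x y)"
    and scale_left: "B (sc a x) y = a * B x y"
    and add_left: "B (x + x') y = B x y + B x' y"
begin

lemma diag_real: "B x x = complex_of_real (Re (B x x))"
  using cnj_commute[of x x] by (simp add: complex_eq_iff)

lemma cmod_diag: "cmod (B x x) = Re (B x x)"
  by (metis Re_nonneg diag_real norm_of_real abs_of_nonneg)

lemma scale_right: "B x (sc a y) = cnj a * B x y"
proof -
  have "B x (sc a y) = cnj (a * B y x)"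
    by (simp add: cnj_commute[of x "sc a y"] scale_left)
  then show ?thesis
    by (simp add: cnj_commute[of y x])
qed

lemma add_right: "B x (y + y') = B x y + B x y'"
proof -
  have "B x (y + y') = cnj (B y x + B y' x)"
    by (simp add: cnj_commute[of x "y + y'"] add_left)
  then show ?thesis
    by (simp add: cnj_commute[of y x] cnj_commute[of y' x])
qed

lemma zero_left: "B 0 y = 0"
  using add_left[of 0 0 y] by simp

lemma sum_left: "B (\<Sum>i\<in>I. f i) y = (\<Sum>i\<in>I. B (f i) y)"
  using zero_left by (induction I rule: infinite_finite_induct) (simp_all add: add_left)

lemma sum_right: "B x (\<Sum>i\<in>I. f i) = (\<Sum>i\<in>I. B x (f i))"
proof -
  have "B x (\<Sum>i\<in>I. f i) = (\<Sum>i\<in>I. cnj (B (f i) x))"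
    by (simp add: cnj_commute[of x "sum f I"] sum_left)
  then show ?thesis
    by (simp add: cnj_commute[of _ x])
qed

lemma Cauchy_Schwarz: "(cmod (B x y))\<^sup>2 \<le> Re (B x x) * Re (B y y)"
proof (rule quadratic_nonneg_imp_le)
  fix r
  define t where "t = B x y"
  define s where "s = - (complex_of_real r * t)"
  have "B (x + sc s y) (x + sc s y) = B x x + cnj s * t + s * cnj t + s * cnj s * B y y"
    by (simp add: add_left add_right scale_left scale_right cnj_commute[of y x] t_def
        algebra_simps)
  also have "Re \<dots> = Re (B x x) - 2 * r * (cmod t)\<^sup>2 + r\<^sup>2 * (cmod t)\<^sup>2 * Re (B y y)"
    unfolding cmod_power2 by (subst (1 2) diag_real) (simp add: s_def power2_eq_square algebra_simps)
  finally show
    "0 \<le> Re (B x x) - 2 * r * (cmod (B x y))\<^sup>2 + r\<^sup>2 * (cmod (B x y))\<^sup>2 * Re (B y y)"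
    using Re_nonneg[of "x + sc s y"] by (simp add: t_def)
qed (simp_all add: Re_nonneg)

lemma cmod_sum_le_gram:
  "(cmod (\<Sum>i\<in>I. c i * B x (y i)))\<^sup>2
     \<le> Re (B x x) * (\<Sum>i\<in>I. \<Sum>j\<in>I. cmod (c i) * cmod (c j) * cmod (B (y i) (y j)))"
proof -
  define w where "w = (\<Sum>i\<in>I. sc (cnj (c i)) (y i))"
  have "B (y i) w = (\<Sum>j\<in>I. c j * B (y i) (y j))" for i
    by (simp add: w_def sum_right scale_right)
  then have "B w w = (\<Sum>i\<in>I. \<Sum>j\<in>I. cnj (c i) * c j * B (y i) (y j))"
    by (subst (1) w_def) (simp add: sum_left scale_left sum_distrib_left mult.assoc)
  then have "Re (B w w) \<le> cmod (\<Sum>i\<in>I. \<Sum>j\<in>I. cnj (c i) * c j * B (y i) (y j))"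
    by (metis complex_Re_le_cmod)
  also have "\<dots> \<le> (\<Sum>i\<in>I. \<Sum>j\<in>I. cmod (c i) * cmod (c j) * cmod (B (y i) (y j)))"
    by (intro order_trans[OF norm_sum] sum_mono) (simp add: norm_mult)
  finally have "Re (B x x) * Re (B w w)
      \<le> Re (B x x) * (\<Sum>i\<in>I. \<Sum>j\<in>I. cmod (c i) * cmod (c j) * cmod (B (y i) (y j)))"
    by (simp add: mult_left_mono Re_nonneg)
  moreover have "B x w = (\<Sum>i\<in>I. c i * B x (y i))"
    by (simp add: w_def sum_right scale_right)
  ultimately show ?thesis
    using Cauchy_Schwarz[of x w] by simp
qed

end

lemma real_semi_inner_two_inner_R: "two_inner_R ip \<Longrightarrow> real_semi_inner (\<lambda>u v. ip u v z)"
  unfolding two_inner_R_def real_semi_inner_def by blast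

lemma complex_semi_inner_two_inner_C:
  "two_inner_C sc ip \<Longrightarrow> complex_semi_inner sc (\<lambda>u v. ip u v z)"
  unfolding two_inner_C_def complex_semi_inner_def by blast

lemma tnorm_R_nonneg: "two_inner_R ip \<Longrightarrow> 0 \<le> tnorm_R ip x z"
  unfolding tnorm_R_def using real_semi_inner.nonneg[OF real_semi_inner_two_inner_R] by simp

lemma tnorm_C_nonneg: "two_inner_C sc ip \<Longrightarrow> 0 \<le> tnorm_C ip x z"
  unfolding tnorm_C_def using complex_semi_inner.Re_nonneg[OF complex_semi_inner_two_inner_C] by simp

lemma two_inner_R_le_gram_majorant:
  assumes "two_inner_R ip"
  shows "\<bar>\<Sum>i=1..n. c i * ip x (y i) z\<bar>\<^sup>2
    \<le> (tnorm_R ip x z)\<^sup>2 *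
       gram_majorant n (\<lambda>i. \<bar>c i\<bar>) (\<lambda>i. tnorm_R ip (y i) z) (\<lambda>i j. \<bar>ip (y i) (y j) z\<bar>)"
proof -
  interpret real_semi_inner "\<lambda>u v. ip u v z"
    using assms by (rule real_semi_inner_two_inner_R)
  have "(tnorm_R ip u z)\<^sup>2 = ip u u z" "\<bar>ip u u z\<bar> = ip u u z" for u
    by (simp_all add: tnorm_R_def nonneg)
  then show ?thesis
    using abs_sum_le_gram[of c x y "{1..n}"] by (simp add: gram_majorant_eq_sum_sum)
qed

lemma two_inner_C_le_gram_majorant:
  assumes "two_inner_C sc ip"
  shows "(cmod (\<Sum>i=1..n. c i * ip x (y i) z))\<^sup>2
    \<le> (tnorm_C ip x z)\<^sup>2 *
       gram_majorant n (\<lambda>i. cmod (c i)) (\<lambda>i. tnorm_C ip (y i) z) (\<lambda>i j. cmod (ip (y i) (y j) z))"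
proof -
  interpret complex_semi_inner sc "\<lambda>u v. ip u v z"
    using assms by (rule complex_semi_inner_two_inner_C)
  have "(tnorm_C ip u z)\<^sup>2 = Re (ip u u z)" for u
    by (simp add: tnorm_C_def Re_nonneg)
  then show ?thesis
    using cmod_sum_le_gram[of c x y "{1..n}"] by (simp add: gram_majorant_eq_sum_sum cmod_diag)
qed

lemma le_bounds_if_le_gram_majorant:
  assumes L: "L \<le> nx\<^sup>2 * gram_majorant n a ny g"
    and a: "\<And>i. 0 \<le> a i" and ny: "\<And>i. 0 \<le> ny i" and g: "\<And>i j. 0 \<le> g i j"
  shows "L \<le> boundA n nx a ny g \<and> L \<le> boundB n nx a ny g \<and>
    (\<forall>p q. 1 < p \<and> 1 / p + 1 / q = 1 \<longrightarrow> L \<le> boundC p q n nx a ny g) \<and>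
    L \<le> boundD n nx a ny g"
  using a ny g
  by (intro conjI allI impI order_trans[OF L gram_majorant_le_boundA]
      order_trans[OF L gram_majorant_le_boundB] order_trans[OF L gram_majorant_le_boundC]
      order_trans[OF L gram_majorant_le_boundD]) auto

theorem corollary3p2:
  fixes ipR :: "'a::real_vector \<Rightarrow> 'a \<Rightarrow> 'a \<Rightarrow> real"
    and scC :: "complex \<Rightarrow> 'b::ab_group_add \<Rightarrow> 'b"
    and ipC :: "'b \<Rightarrow> 'b \<Rightarrow> 'b \<Rightarrow> complex"
  shows
  "(\<forall>n (x::'a) (y::nat \<Rightarrow> 'a) z (c::nat \<Rightarrow> real).
      two_inner_R ipR \<and> 0 < n \<longrightarrow>
      (let L = \<bar>\<Sum>i=1..n. c i * ipR x (y i) z\<bar>\<^sup>2;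
           nx = tnorm_R ipR x z; a = (\<lambda>i. \<bar>c i\<bar>);
           ny = (\<lambda>i. tnorm_R ipR (y i) z); g = (\<lambda>i j. \<bar>ipR (y i) (y j) z\<bar>)
       in L \<le> boundA n nx a ny g \<and> L \<le> boundB n nx a ny g \<and>
          (\<forall>p q. 1 < p \<and> 1 / p + 1 / q = 1 \<longrightarrow> L \<le> boundC p q n nx a ny g) \<and>
          L \<le> boundD n nx a ny g))
   \<and>
   (\<forall>n (x::'b) (y::nat \<Rightarrow> 'b) z (c::nat \<Rightarrow> complex).
      two_inner_C scC ipC \<and> 0 < n \<longrightarrow>
      (let L = (cmod (\<Sum>i=1..n. c i * ipC x (y i) z))\<^sup>2;
           nx = tnorm_C ipC x z; a = (\<lambda>i. cmod (c i));
           ny = (\<lambda>i. tnorm_C ipC (y i) z); g = (\<lambda>i j. cmod (ipC (y i) (y j) z))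
       in L \<le> boundA n nx a ny g \<and> L \<le> boundB n nx a ny g \<and>
          (\<forall>p q. 1 < p \<and> 1 / p + 1 / q = 1 \<longrightarrow> L \<le> boundC p q n nx a ny g) \<and>
          L \<le> boundD n nx a ny g))"
proof (intro conjI allI impI, goal_cases real complex)
  (* The bounds hold for n = 0 as well. *)
  case (real n x y z c)
  then have ip: "two_inner_R ipR"
    by simp
  then show ?case
    unfolding Let_def
    by (intro le_bounds_if_le_gram_majorant two_inner_R_le_gram_majorant tnorm_R_nonneg ip
        abs_ge_zero)
next
  case (complex n x y z c)
  then have ip: "two_inner_C scC ipC"
    by simp
  then show ?case
    unfolding Let_def
    by (intro le_bounds_if_le_gram_majorant two_inner_C_le_gram_majorant tnorm_C_nonneg ip
        norm_ge_zero)
qed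

end
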